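(* (1) Figure-eight knot. Let $\Delta(E;t)=-t^2+3t-1$ be the Alexander polynomial of the figure-eight knot $E$. For $u\in\mathbb{C}$ and $y\in\mathbb{C}\setminus\{0\}$ with $y+y^{-1}=2\cosh(u)-1$, put \[ H(E;u,y)=\operatorname{Li}_2\bigl(y^{-1}e^{-u}\bigr)-\operatorname{Li}_2\bigl(y\,e^{-u}\bigr)+\bigl(\log(-y)+\pi\sqrt{-1}\bigr)u, \] where $\operatorname{Li}_2$ is the dilogarithm and the branch of $\log$ is chosen so that $\log(-1)=-\pi\sqrt{-1}$. Then there exist $u\in\mathbb{C}$ and such a $y$ with $H(E;u,y)=0$ and $\Delta(E;e^{u})=0$. (2) Torus knots. Let $a,b>1$ be coprime integers, let $\Delta(T(a,b);t)=\dfrac{(t^{ab}-1)(t-1)}{(t^a-1)(t^b-1)}$ be the Alexander polynomial of the torus knot $T(a,b)$, and define the entire function \[ H\bigl(T(a,b);u\bigr)=\frac{-\bigl(ab(u+2\pi\sqrt{-1})-2\pi\sqrt{-1}\bigr)^2}{4ab},\qquad u\in\mathbb{C}. \] Then the equations $H\bigl(T(a,b);u\bigr)=0$ and $\Delta\bigl(T(a,b);e^{u}\bigr)=0$ have a common root $u\in\mathbb{C}$.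
   Context: Here $\Delta(T(a,b);t)$ is understood as the polynomial in $t$ obtained from the given rational expression (which is a polynomial), and $\Delta(K;e^u)=0$ means this polynomial vanishes at $t=e^u$. The functions $H$ above are the explicit formulas (regarded as functions on all of $\mathbb{C}$) for the quantity $H(K;u)=(u+2\pi\sqrt{-1})\lim_{N\to\infty}\frac{1}{N}\log J_N\bigl(K;\exp((u+2\pi\sqrt{-1})/N)\bigr)$, where $J_N(K;q)$ is the $N$-colored Jones polynomial normalized so that $J_N(\text{unknot};q)=1$. *)

theory Defs
  imports "HOL-Complex_Analysis.Complex_Analysis"
begin

definition Li2 :: "complex \<Rightarrow> complex" where
  "Li2 z = - contour_integral (linepath 0 z) (\<lambda>t. Ln (1 - t) / t)"

text \<open>Branch of log with argument in [-pi, pi), so that logm (-1) = - pi i.\<close>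
definition logm :: "complex \<Rightarrow> complex" where
  "logm z = (if Im z = 0 \<and> Re z < 0 then Ln z - 2 * of_real pi * \<i> else Ln z)"

definition alex_E :: "complex poly" where
  "alex_E = [:-1, 3, -1:]"

definition H_E :: "complex \<Rightarrow> complex \<Rightarrow> complex" where
  "H_E u y = Li2 (inverse y * exp (-u)) - Li2 (y * exp (-u))
             + (logm (-y) + of_real pi * \<i>) * u"

definition alex_T :: "nat \<Rightarrow> nat \<Rightarrow> complex poly" where
  "alex_T a b = ((monom 1 (a*b) - 1) * [:-1, 1:]) div ((monom 1 a - 1) * (monom 1 b - 1))"

definition H_T :: "nat \<Rightarrow> nat \<Rightarrow> complex \<Rightarrow> complex" where
  "H_T a b u = - ((of_nat (a*b) * (u + 2 * of_real pi * \<i>) - 2 * of_real pi * \<i>)^2)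
               / (4 * of_nat (a*b))"

end

theory Submission
  imports Defs "HOL-Computational_Algebra.Polynomial_Factorial"
    "HOL-Computational_Algebra.Fundamental_Theorem_Algebra" "HOL-Computational_Algebra.Field_as_Ring"
begin

text \<open>For the figure-eight knot every root \<open>e\<^sup>u\<close> of the Alexander polynomial satisfies
  \<open>e\<^sup>u + e\<^sup>-\<^sup>u = 3\<close>, so \<open>y = 1\<close> solves the constraint; at \<open>y = 1\<close> the two
  dilogarithms cancel and \<open>log(-1) + \<pi>i = 0\<close>.
  For the torus knot \<open>T(a,b)\<close> the quadratic \<open>H\<close> has the single root \<open>u = 2\<pi>i/ab - 2\<pi>i\<close>,
  and \<open>e\<^sup>u\<close> is a primitive \<open>ab\<close>-th root of unity. It is a root of
  \<open>(t\<^sup>a\<^sup>b - 1)(t - 1)\<close> but not of \<open>(t\<^sup>a - 1)(t\<^sup>b - 1)\<close>; the latter divides the former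
  because for coprime \<open>a, b\<close> the polynomials \<open>(t\<^sup>a - 1)/(t - 1)\<close> and \<open>(t\<^sup>b - 1)/(t - 1)\<close>
  have no common root and both divide \<open>(t\<^sup>a\<^sup>b - 1)/(t - 1)\<close>.\<close>

lemma coprime_poly_iff_no_common_root:
  fixes p q :: "'a :: alg_closed_field poly"
  shows "coprime p q \<longleftrightarrow> (\<forall>x. poly p x = 0 \<longrightarrow> poly q x \<noteq> 0)"
proof
  assume "coprime p q"
  then show "\<forall>x. poly p x = 0 \<longrightarrow> poly q x \<noteq> 0"
    using coprime_poly_0 by blast
next
  assume no_common: "\<forall>x. poly p x = 0 \<longrightarrow> poly q x \<noteq> 0"
  show "coprime p q"
  proof (rule coprimeI)
    fix c assume c: "c dvd p" "c dvd q"
    show "is_unit c"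
    proof (rule ccontr)
      assume "\<not> is_unit c"
      moreover have "c \<noteq> 0"
        using c no_common by auto
      ultimately have "degree c > 0"
        using is_unit_iff_degree by blast
      then obtain x where "poly c x = 0"
        using alg_closed_imp_poly_has_root by blast
      with c no_common show False
        by (meson dvd_trans poly_eq_0_iff_dvd)
    qed
  qed
qed

definition geometric_poly :: "nat \<Rightarrow> 'a :: comm_ring_1 poly" where
  "geometric_poly n = (\<Sum>i<n. monom 1 i)"

lemma monom_1_minus_1_eq:
  "(monom 1 n - 1 :: 'a :: comm_ring_1 poly) = [:-1, 1:] * geometric_poly n"
proof -
  have "(monom 1 n - 1 :: 'a poly) = [:0, 1:] ^ n - 1"
    by (simp add: monom_altdef)
  also have "\<dots> = ([:0, 1:] - 1) * (\<Sum>i<n. [:0, 1:] ^ i)"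
    by (rule power_diff_1_eq)
  finally show ?thesis
    by (simp add: geometric_poly_def monom_altdef one_pCons)
qed

lemma poly_geometric_poly_1 [simp]: "poly (geometric_poly n) 1 = of_nat n"
  by (simp add: geometric_poly_def poly_sum poly_monom)

lemma poly_geometric_poly_eq_0_imp_power_eq_1:
  assumes "poly (geometric_poly n) z = 0"
  shows "z ^ n = 1"
  using arg_cong[OF monom_1_minus_1_eq[of n], of "\<lambda>p. poly p z"] assms
  by (simp add: poly_monom)

lemma geometric_poly_dvd_mult:
  "(geometric_poly a :: 'a :: idom poly) dvd geometric_poly (a * b)"
proof -
  have "(monom 1 a :: 'a poly) - 1 dvd (monom 1 a) ^ b - 1"
    using power_diff_1_eq[of "monom 1 a :: 'a poly" b] by (metis dvd_triv_left)
  also have "(monom 1 a :: 'a poly) ^ b = monom 1 (a * b)"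
    by (simp add: monom_altdef power_mult)
  finally have "[:-1, 1:] * geometric_poly a dvd [:-1, 1:] * (geometric_poly (a * b) :: 'a poly)"
    by (simp only: monom_1_minus_1_eq)
  then show ?thesis
    by (simp only: dvd_mult_cancel_left) simp
qed

lemma coprime_geometric_poly:
  fixes a b :: nat
  assumes "coprime a b" "a > 0"
  shows "coprime (geometric_poly a :: 'a :: {alg_closed_field, field_char_0} poly) (geometric_poly b)"
  unfolding coprime_poly_iff_no_common_root
proof (intro allI impI notI)
  fix z :: 'a
  assume roots: "poly (geometric_poly a) z = 0" "poly (geometric_poly b) z = 0"
  then have "z ^ a = 1" "z ^ b = 1"
    by (simp_all add: poly_geometric_poly_eq_0_imp_power_eq_1)
  obtain x y where "a * x = b * y + gcd a b"
    using bezout_nat assms(2) by blast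
  with assms(1) have "z ^ (a * x) = z ^ (b * y) * z"
    by (simp add: power_add)
  with \<open>z ^ a = 1\<close> \<open>z ^ b = 1\<close> have "z = 1"
    by (simp add: power_mult)
  with roots(1) assms(2) show False
    by simp
qed

lemma torus_denominator_dvd_numerator:
  fixes a b :: nat
  assumes "coprime a b" "a > 0"
  shows "((monom 1 a - 1) * (monom 1 b - 1) :: complex poly)
           dvd (monom 1 (a * b) - 1) * [:-1, 1:]"
proof -
  have "(geometric_poly b :: complex poly) dvd geometric_poly (a * b)"
    using geometric_poly_dvd_mult[of b a] by (simp add: mult.commute)
  then have "geometric_poly a * geometric_poly b dvd (geometric_poly (a * b) :: complex poly)"
    by (rule divides_mult[OF geometric_poly_dvd_mult _ coprime_geometric_poly[OF assms]])
  then have "([:-1, 1:] * [:-1, 1:]) * (geometric_poly a * geometric_poly b)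
              dvd ([:-1, 1:] * [:-1, 1:]) * (geometric_poly (a * b) :: complex poly)"
    by (rule mult_dvd_mono[OF dvd_refl])
  then show ?thesis
    by (simp only: monom_1_minus_1_eq ac_simps)
qed

lemma poly_alex_T_eq_0:
  assumes "coprime a b" "a > 0"
    and "z ^ (a * b) = 1" "z ^ a \<noteq> 1" "z ^ b \<noteq> 1"
  shows "poly (alex_T a b) z = 0"
proof -
  define d :: "complex poly" where "d = (monom 1 a - 1) * (monom 1 b - 1)"
  define p :: "complex poly" where "p = (monom 1 (a * b) - 1) * [:-1, 1:]"
  have "d * alex_T a b = p"
    unfolding alex_T_def d_def p_def using torus_denominator_dvd_numerator[OF assms(1,2)]
    by (rule dvd_mult_div_cancel)
  then have "poly d z * poly (alex_T a b) z = poly p z"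
    by (metis poly_mult)
  also have "poly p z = 0"
    using assms(3) by (simp add: p_def poly_monom)
  finally have "poly d z * poly (alex_T a b) z = 0" .
  moreover have "poly d z \<noteq> 0"
    using assms(4,5) by (simp add: d_def poly_monom)
  ultimately show ?thesis
    by simp
qed

lemma exp_2pi_i_div_power_eq_1_iff:
  assumes "n > 0"
  shows "exp (2 * of_real pi * \<i> / of_nat n) ^ k = 1 \<longleftrightarrow> n dvd k"
proof -
  have "exp (2 * of_real pi * \<i> / of_nat n) ^ k = exp (2 * of_real pi * \<i> * of_nat k / of_nat n)"
    by (simp add: exp_of_nat_mult[symmetric] mult_ac)
  with assms show ?thesis
    by (simp add: complex_root_unity_eq_1)
qed

lemma H_T_eq_0_iff:
  assumes "a * b > 0"
  shows "H_T a b u = 0 \<longleftrightarrow> u = 2 * of_real pi * \<i> / of_nat (a * b) - 2 * of_real pi * \<i>"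
proof -
  have "H_T a b u = 0 \<longleftrightarrow> of_nat (a * b) * (u + 2 * of_real pi * \<i>) = 2 * of_real pi * \<i>"
    using assms by (simp add: H_T_def)
  also have "\<dots> \<longleftrightarrow> u = 2 * of_real pi * \<i> / of_nat (a * b) - 2 * of_real pi * \<i>"
    using assms by (auto simp: field_simps)
  finally show ?thesis .
qed

lemma torus_knot_common_root:
  assumes "1 < a" "1 < b" "coprime a b"
  shows "\<exists>u. H_T a b u = 0 \<and> poly (alex_T a b) (exp u) = 0"
proof -
  define n where "n = a * b"
  define u where "u = 2 * of_real pi * \<i> / of_nat n - 2 * of_real pi * \<i>"
  have "n > 0" "a < n" "b < n"
    using assms(1,2) by (simp_all add: n_def)
  have exp_u_power: "exp u ^ k = 1 \<longleftrightarrow> n dvd k" for k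
    unfolding u_def exp_diff using exp_2pi_i_div_power_eq_1_iff[OF \<open>n > 0\<close>] by simp
  have "exp u ^ (a * b) = 1" "exp u ^ a \<noteq> 1" "exp u ^ b \<noteq> 1"
    using \<open>a < n\<close> \<open>b < n\<close> assms(1,2)
    by (simp_all add: exp_u_power n_def nat_dvd_not_less)
  then have "poly (alex_T a b) (exp u) = 0"
    using assms(1,3) by (intro poly_alex_T_eq_0) simp_all
  moreover have "H_T a b u = 0"
    using H_T_eq_0_iff \<open>n > 0\<close> unfolding u_def n_def by blast
  ultimately show ?thesis
    by blast
qed

lemma H_E_1 [simp]: "H_E u 1 = 0"
  by (simp add: H_E_def logm_def)

lemma alex_E_root_imp_add_inverse_eq:
  assumes "poly alex_E t = 0"
  shows "t + inverse t = 3"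
proof -
  have root: "t * t - 3 * t + 1 = 0"
    using assms by (simp add: alex_E_def algebra_simps)
  then have "t \<noteq> 0"
    by auto
  have "t * (t + inverse t) = t * t + 1"
    using \<open>t \<noteq> 0\<close> by (simp add: distrib_left)
  also have "\<dots> = t * 3"
    using root by (simp add: algebra_simps eq_diff_eq)
  finally show ?thesis
    using \<open>t \<noteq> 0\<close> by simp
qed

lemma alex_E_root_imp_cosh_eq:
  assumes "poly alex_E (exp u) = 0"
  shows "2 * cosh u = 3"
proof -
  have "2 * cosh u = exp u + inverse (exp u)"
    by (simp add: cosh_def scaleR_conv_of_real exp_minus)
  with alex_E_root_imp_add_inverse_eq[OF assms] show ?thesis
    by simp
qed

lemma alex_E_has_exp_root: "\<exists>u. poly alex_E (exp u) = 0"
proof -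
  have "degree alex_E > 0"
    by (simp add: alex_E_def)
  then obtain t where "poly alex_E t = 0"
    using alg_closed_imp_poly_has_root by blast
  moreover have "t \<noteq> 0"
    using calculation by (auto simp: alex_E_def)
  ultimately show ?thesis
    by (metis exp_Ln)
qed

theorem mainTheorem1:
  shows "(\<exists>u y. y \<noteq> 0 \<and> y + inverse y = 2 * cosh u - 1
             \<and> H_E u y = 0 \<and> poly alex_E (exp u) = 0)
       \<and> (\<forall>a b :: nat. 1 < a \<longrightarrow> 1 < b \<longrightarrow> coprime a b \<longrightarrow>
             (\<exists>u. H_T a b u = 0 \<and> poly (alex_T a b) (exp u) = 0))"
proof
  obtain u where "poly alex_E (exp u) = 0"
    using alex_E_has_exp_root by blast
  moreover from this have "1 + inverse 1 = 2 * cosh u - 1"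
    using alex_E_root_imp_cosh_eq by simp
  ultimately show "\<exists>u y. y \<noteq> 0 \<and> y + inverse y = 2 * cosh u - 1
                     \<and> H_E u y = 0 \<and> poly alex_E (exp u) = 0"
    by (intro exI[of _ u] exI[of _ 1]) simp
next
  show "\<forall>a b :: nat. 1 < a \<longrightarrow> 1 < b \<longrightarrow> coprime a b \<longrightarrow>
          (\<exists>u. H_T a b u = 0 \<and> poly (alex_T a b) (exp u) = 0)"
    using torus_knot_common_root by blast
qed

end
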